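(* Let $A_2\in\mathbf{C}^{n\times n}$. Then $\mathrm{e}^{t\{0,A_2\}}=\{\Phi_1(t),\Phi_2(t)\}$ for $t\in\mathbf{R}^+=[0,\infty)$ and $\{0,A_2\}^t=\{\Phi_1(t),\Phi_2(t)\}$ for $t\in\mathbf{Z}^+=\{0,1,2,\dots\}$, where $$\Phi_1(t)=\begin{cases}\sum_{i=0}^\infty\frac{t^{2i}}{(2i)!}(A_2^{\#}A_2)^i, & t\in\mathbf{R}^+,\\ (A_2^{\#}A_2)^{t/2}, & t\in\mathbf{Z}^+,\ t \text{ even},\\ 0, & t\in\mathbf{Z}^+,\ t\text{ odd},\end{cases}\qquad \Phi_2(t)=\begin{cases}\sum_{i=0}^\infty\frac{t^{2i+1}}{(2i+1)!}A_2(A_2^{\#}A_2)^i, & t\in\mathbf{R}^+,\\ 0, & t\in\mathbf{Z}^+,\ t \text{ even},\\ A_2(A_2^{\#}A_2)^{(t-1)/2}, & t\in\mathbf{Z}^+,\ t\text{ odd}.\end{cases}$$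
   Context: $P^{\#}$ denotes entrywise conjugate. For $A_1,A_2\in\mathbf{C}^{n\times n}$ the bimatrix $\{A_1,A_2\}$ is the real-linear map $x\mapsto A_1x+A_2^{\#}x^{\#}$ on $\mathbf{C}^n$; products are compositions and equality means equality as maps. Powers: $\{A_1,A_2\}^0=\{I_n,0\}$, $\{A_1,A_2\}^i=\{A_1,A_2\}\{A_1,A_2\}^{i-1}$. Exponent: $\mathrm{e}^{t\{A_1,A_2\}}=\sum_{i=0}^\infty\frac{t^i}{i!}\{A_1,A_2\}^i$, $t\in\mathbf{R}$. *)

theory Defs
  imports "HOL-Analysis.Analysis"
begin

text \<open>Entrywise conjugate of vectors and matrices (the paper's P^#).\<close>
definition vconj :: "complex ^ 'n \<Rightarrow> complex ^ 'n" where
  "vconj x = (\<chi> i. cnj (x $ i))"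

definition mconj :: "complex ^ 'n ^ 'm \<Rightarrow> complex ^ 'n ^ 'm" where
  "mconj A = (\<chi> i j. cnj (A $ i $ j))"

text \<open>Ordinary matrix power (note: the built-in ^ on vec is entrywise).\<close>
primrec matpow :: "complex ^ 'n ^ 'n \<Rightarrow> nat \<Rightarrow> complex ^ 'n ^ 'n" where
  "matpow A 0 = mat 1"
| "matpow A (Suc k) = A ** matpow A k"

text \<open>The bimatrix {A1,A2} as the real-linear map x \<mapsto> A1 x + A2^# x^#.\<close>
definition bimat :: "complex ^ 'n ^ 'n \<Rightarrow> complex ^ 'n ^ 'n \<Rightarrow> complex ^ 'n \<Rightarrow> complex ^ 'n" where
  "bimat A1 A2 = (\<lambda>x. A1 *v x + mconj A2 *v vconj x)"

definition bimat_pow :: "complex ^ 'n ^ 'n \<Rightarrow> complex ^ 'n ^ 'n \<Rightarrow> nat \<Rightarrow> complex ^ 'n \<Rightarrow> complex ^ 'n" where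
  "bimat_pow A1 A2 i = (bimat A1 A2 ^^ i)"

definition bimat_exp :: "real \<Rightarrow> complex ^ 'n ^ 'n \<Rightarrow> complex ^ 'n ^ 'n \<Rightarrow> complex ^ 'n \<Rightarrow> complex ^ 'n" where
  "bimat_exp t A1 A2 = (\<lambda>x. \<Sum>i. (t ^ i / fact i) *\<^sub>R bimat_pow A1 A2 i x)"

end

theory Submission
  imports Defs
begin

(*
  Squaring the antilinear map x \<mapsto> A\<^sup># x\<^sup># gives the linear map x \<mapsto> A\<^sup># A x, so the even
  powers of {0, A} are {(A\<^sup># A)\<^sup>k, 0} and the odd ones {0, A (A\<^sup># A)\<^sup>k}.  Splitting the
  exponential series into its even and odd terms, each part is the image of a matrix series
  under one of the continuous real-linear maps P \<mapsto> P x and P \<mapsto> P\<^sup># x\<^sup>#; the matrix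
  series converge because the norms of the powers (A\<^sup># A)\<^sup>k grow at most geometrically.
  Nothing depends on the sign of t.
*)

lemma sums_even_odd_split:
  fixes f :: "nat \<Rightarrow> 'a::real_normed_vector"
  assumes "(\<lambda>k. f (2 * k)) sums a" and "(\<lambda>k. f (2 * k + 1)) sums b"
  shows "f sums (a + b)"
proof -
  have "(\<lambda>n. if even n then f n else 0) sums a"
  proof (subst sums_mono_reindex[of "\<lambda>k. 2 * k", symmetric])
    show "strict_mono (\<lambda>k::nat. 2 * k)" by (simp add: strict_mono_def)
    show "(if even n then f n else 0) = 0" if "n \<notin> range (\<lambda>k. 2 * k)" for n
      using that by auto
    show "(\<lambda>k. if even (2 * k) then f (2 * k) else 0) sums a" using assms(1) by simp
  qed
  moreover have "(\<lambda>n. if odd n then f n else 0) sums b"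
  proof (subst sums_mono_reindex[of "\<lambda>k. 2 * k + 1", symmetric])
    show "strict_mono (\<lambda>k::nat. 2 * k + 1)" by (simp add: strict_mono_def)
    show "(if odd n then f n else 0) = 0" if "n \<notin> range (\<lambda>k. 2 * k + 1)" for n
      using that by (auto elim: oddE)
    show "(\<lambda>k. if odd (2 * k + 1) then f (2 * k + 1) else 0) sums b" using assms(2) by simp
  qed
  ultimately have "(\<lambda>n. (if even n then f n else 0) + (if odd n then f n else 0)) sums (a + b)"
    by (rule sums_add)
  moreover have "(\<lambda>n. (if even n then f n else 0) + (if odd n then f n else 0)) = f"
    by auto
  ultimately show ?thesis
    by simp
qed

lemma summable_by_exp_majorant:
  fixes a :: "nat \<Rightarrow> 'a::banach"
  assumes "\<And>k. norm (a k) \<le> C * r ^ k / fact k"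
  shows "summable a"
proof (rule summable_comparison_test)
  show "summable (\<lambda>k. C * (inverse (fact k) * r ^ k))"
    by (intro summable_mult summable_exp)
  show "\<exists>N. \<forall>k\<ge>N. norm (a k) \<le> C * (inverse (fact k) * r ^ k)"
    using assms by (simp add: field_simps)
qed

lemma summable_even_exp_series:
  fixes a :: "nat \<Rightarrow> 'a::banach"
  assumes bound: "\<And>k. norm (a k) \<le> C * L ^ k"
  shows "summable (\<lambda>k. (t ^ (2 * k) / fact (2 * k)) *\<^sub>R a k)"
proof (rule summable_by_exp_majorant)
  fix k
  have "norm ((t ^ (2 * k) / fact (2 * k)) *\<^sub>R a k) = (t\<^sup>2) ^ k / fact (2 * k) * norm (a k)"
    by (simp add: power_mult power_abs)
  also have "\<dots> \<le> (t\<^sup>2) ^ k / fact k * (C * L ^ k)"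
    using order_trans[OF norm_ge_zero bound]
    by (intro mult_mono divide_left_mono bound) (auto simp: fact_mono)
  also have "\<dots> = C * (t\<^sup>2 * L) ^ k / fact k"
    by (simp add: power_mult_distrib)
  finally show "norm ((t ^ (2 * k) / fact (2 * k)) *\<^sub>R a k) \<le> C * (t\<^sup>2 * L) ^ k / fact k"
    .
qed

lemma summable_odd_exp_series:
  fixes a :: "nat \<Rightarrow> 'a::banach"
  assumes bound: "\<And>k. norm (a k) \<le> C * L ^ k"
  shows "summable (\<lambda>k. (t ^ (2 * k + 1) / fact (2 * k + 1)) *\<^sub>R a k)"
proof (rule summable_by_exp_majorant)
  fix k
  have "norm ((t ^ (2 * k + 1) / fact (2 * k + 1)) *\<^sub>R a k)
      = \<bar>t\<bar> * (t\<^sup>2) ^ k / fact (2 * k + 1) * norm (a k)"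
    by (simp add: power_mult power_abs abs_mult)
  also have "\<dots> \<le> \<bar>t\<bar> * (t\<^sup>2) ^ k / fact k * (C * L ^ k)"
    using order_trans[OF norm_ge_zero bound] fact_mono[of k "2 * k + 1"]
    by (intro mult_mono divide_left_mono bound) (auto simp del: fact_Suc)
  also have "\<dots> = (\<bar>t\<bar> * C) * (t\<^sup>2 * L) ^ k / fact k"
    by (simp add: power_mult_distrib)
  finally show "norm ((t ^ (2 * k + 1) / fact (2 * k + 1)) *\<^sub>R a k)
      \<le> (\<bar>t\<bar> * C) * (t\<^sup>2 * L) ^ k / fact k" .
qed

lemma vconj_vconj [simp]: "vconj (vconj x) = x"
  by (simp add: vec_eq_iff vconj_def)

lemma mconj_mconj [simp]: "mconj (mconj A) = A"
  by (simp add: vec_eq_iff mconj_def)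

lemma vconj_matrix_vector_mult: "vconj (A *v x) = mconj A *v vconj x"
  by (simp add: vec_eq_iff vconj_def mconj_def matrix_vector_mult_def)

lemma mconj_matrix_matrix_mult: "mconj (A ** B) = mconj A ** mconj B"
  by (simp add: vec_eq_iff mconj_def matrix_matrix_mult_def)

lemma mconj_scaleR: "mconj (c *\<^sub>R A) = c *\<^sub>R mconj A"
  by (simp add: vec_eq_iff mconj_def)

lemma scaleR_matrix_vector_mult:
  "(c *\<^sub>R A) *v x = c *\<^sub>R (A *v x)" for A :: "'a::real_algebra_1^'n^'m"
  by (simp add: vec_eq_iff matrix_vector_mult_def scaleR_sum_right)

lemma bounded_linear_matrix_vector_mult_left:
  "bounded_linear (\<lambda>A::'a::{euclidean_space,real_algebra_1}^'n^'m. A *v x)"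
  unfolding linear_conv_bounded_linear[symmetric]
  by (rule linearI) (simp_all add: matrix_vector_mult_add_rdistrib scaleR_matrix_vector_mult)

lemma bounded_linear_mconj: "bounded_linear (mconj :: complex^'n^'m \<Rightarrow> _)"
  unfolding linear_conv_bounded_linear[symmetric]
  by (rule linearI) (simp_all add: vec_eq_iff mconj_def)

lemma bilinear_matrix_matrix_mult:
  "bilinear ((**) :: 'a::real_algebra_1^'n^'m \<Rightarrow> 'a^'p^'n \<Rightarrow> 'a^'p^'m)"
  by (auto simp: bilinear_def matrix_add_ldistrib matrix_scalar_ac scalar_matrix_assoc intro!: linearI)
     (simp add: matrix_matrix_mult_def vec_eq_iff distrib_right sum.distrib)

lemma norm_matpow_le:
  fixes M :: "complex^'n^'n"
  assumes "\<And>(X :: complex^'n^'n) (Y :: complex^'n^'n). norm (X ** Y) \<le> K * norm X * norm Y"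
    and "K \<ge> 0"
  shows "norm (matpow M k) \<le> norm (mat 1 :: complex^'n^'n) * (K * norm M) ^ k"
proof (induction k)
  case (Suc k)
  have "norm (matpow M (Suc k)) \<le> K * norm M * norm (matpow M k)"
    using assms(1) by simp
  also have "\<dots> \<le> K * norm M * (norm (mat 1 :: complex^'n^'n) * (K * norm M) ^ k)"
    using Suc.IH \<open>K \<ge> 0\<close> by (intro mult_left_mono) auto
  finally show ?case
    by (simp add: ac_simps)
qed simp

lemma norm_mult_matpow_geometric:
  fixes B M :: "complex^'n^'n"
  obtains C L where "\<And>k. norm (B ** matpow M k) \<le> C * L ^ k"
proof -
  obtain K where "K > 0"
    and K: "\<And>(X :: complex^'n^'n) (Y :: complex^'n^'n). norm (X ** Y) \<le> K * norm X * norm Y"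
    using bilinear_bounded_pos[OF bilinear_matrix_matrix_mult] by blast
  have "norm (B ** matpow M k) \<le> (K * norm B * norm (mat 1 :: complex^'n^'n)) * (K * norm M) ^ k"
    for k
  proof -
    have "norm (B ** matpow M k) \<le> K * norm B * norm (matpow M k)"
      by (rule K)
    also have "\<dots> \<le> K * norm B * (norm (mat 1 :: complex^'n^'n) * (K * norm M) ^ k)"
      using \<open>K > 0\<close> by (intro mult_left_mono norm_matpow_le[OF K]) auto
    finally show ?thesis
      by (simp add: ac_simps)
  qed
  then show thesis
    by (rule that)
qed

lemma bimat_zero_left: "bimat 0 A x = mconj A *v vconj x"
  by (simp add: bimat_def)

lemma bimat_zero_right: "bimat A 0 = (*v) A"
  by (simp add: bimat_def fun_eq_iff mconj_def vec_eq_iff matrix_vector_mult_def)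

lemma bimat_pow_zero_even: "bimat_pow 0 A (2 * k) x = matpow (mconj A ** A) k *v x"
proof (induction k)
  case (Suc k)
  have "bimat_pow 0 A (2 * Suc k) x = bimat 0 A (bimat 0 A (bimat_pow 0 A (2 * k) x))"
    by (simp add: bimat_pow_def)
  also have "\<dots> = matpow (mconj A ** A) (Suc k) *v x"
    by (simp add: Suc.IH bimat_zero_left vconj_matrix_vector_mult mconj_matrix_matrix_mult
        matrix_vector_mul_assoc matrix_mul_assoc)
  finally show ?case .
qed (simp add: bimat_pow_def)

lemma bimat_pow_zero_odd:
  "bimat_pow 0 A (2 * k + 1) x = mconj (A ** matpow (mconj A ** A) k) *v vconj x"
proof -
  have "bimat_pow 0 A (2 * k + 1) x = bimat 0 A (bimat_pow 0 A (2 * k) x)"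
    by (simp add: bimat_pow_def)
  then show ?thesis
    by (simp add: bimat_pow_zero_even bimat_zero_left vconj_matrix_vector_mult
        mconj_matrix_matrix_mult matrix_vector_mul_assoc)
qed

lemma bimat_exp_zero_left:
  fixes A :: "complex^'n^'n"
  shows "bimat_exp t 0 A =
    bimat (\<Sum>k. (t ^ (2 * k) / fact (2 * k)) *\<^sub>R matpow (mconj A ** A) k)
          (\<Sum>k. (t ^ (2 * k + 1) / fact (2 * k + 1)) *\<^sub>R (A ** matpow (mconj A ** A) k))"
    (is "_ = bimat (suminf ?E) (suminf ?O)")
proof
  fix x :: "complex^'n"
  let ?f = "\<lambda>i. (t ^ i / fact i) *\<^sub>R bimat_pow 0 A i x"
  obtain C L where "\<And>k. norm ((mat 1 :: complex^'n^'n) ** matpow (mconj A ** A) k) \<le> C * L ^ k"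
    using norm_mult_matpow_geometric[of "mat 1" "mconj A ** A"] by blast
  then have "summable ?E"
    by (intro summable_even_exp_series) simp
  then have "(\<lambda>k. ?E k *v x) sums (suminf ?E *v x)"
    by (intro bounded_linear.sums[OF bounded_linear_matrix_vector_mult_left] summable_sums)
  then have even: "(\<lambda>k. ?f (2 * k)) sums (suminf ?E *v x)"
    by (simp add: bimat_pow_zero_even scaleR_matrix_vector_mult)
  obtain C' L' where "\<And>k. norm (A ** matpow (mconj A ** A) k) \<le> C' * L' ^ k"
    using norm_mult_matpow_geometric[of A "mconj A ** A"] by blast
  then have "summable ?O"
    by (rule summable_odd_exp_series)
  then have "(\<lambda>k. mconj (?O k) *v vconj x) sums (mconj (suminf ?O) *v vconj x)"
    by (intro bounded_linear.sums[OF bounded_linear_compose[OF bounded_linear_matrix_vector_mult_left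
          bounded_linear_mconj]] summable_sums)
  then have odd: "(\<lambda>k. ?f (2 * k + 1)) sums (mconj (suminf ?O) *v vconj x)"
    by (simp only: bimat_pow_zero_odd mconj_scaleR scaleR_matrix_vector_mult)
  from sums_even_odd_split[OF even odd]
  show "bimat_exp t 0 A x = bimat (suminf ?E) (suminf ?O) x"
    by (simp add: bimat_exp_def bimat_def sums_iff)
qed

lemma bimat_pow_zero_left:
  "bimat_pow 0 A t =
    bimat (if even t then matpow (mconj A ** A) (t div 2) else 0)
          (if even t then 0 else A ** matpow (mconj A ** A) ((t - 1) div 2))"
proof (cases "even t")
  case True
  then obtain k where "t = 2 * k" ..
  then show ?thesis
    by (simp add: fun_eq_iff bimat_zero_right bimat_pow_zero_even)
next
  case False
  then obtain k where t: "t = 2 * k + 1" by (rule oddE)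
  have "bimat_pow 0 A t x = bimat 0 (A ** matpow (mconj A ** A) k) x" for x
    unfolding t bimat_pow_zero_odd bimat_zero_left ..
  with t show ?thesis
    by (simp add: fun_eq_iff)
qed

theorem corollary2:
  fixes A2 :: "complex ^ 'n ^ 'n"
  shows "(\<forall>t::real. t \<ge> 0 \<longrightarrow>
            bimat_exp t 0 A2 =
            bimat (\<Sum>i. (t ^ (2 * i) / fact (2 * i)) *\<^sub>R matpow (mconj A2 ** A2) i)
                  (\<Sum>i. (t ^ (2 * i + 1) / fact (2 * i + 1)) *\<^sub>R (A2 ** matpow (mconj A2 ** A2) i)))
       \<and> (\<forall>t::nat.
            bimat_pow 0 A2 t =
            bimat (if even t then matpow (mconj A2 ** A2) (t div 2) else 0)
                  (if even t then 0 else A2 ** matpow (mconj A2 ** A2) ((t - 1) div 2)))"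
  using bimat_exp_zero_left bimat_pow_zero_left by blast

end
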